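(* Let $\alpha\in\mathbb{C}$ with $\Re(\alpha)>-1/2$. Then for every $n\in\mathbb{N}_0$ the function $p_n(x;\alpha)$ is a polynomial in $x$ of exactly degree $n$. Moreover, for all $n\in\mathbb{N}_0$: (i) $p_{n+1}(x;\alpha)= x^2 p_n''(x;\alpha)-x(2x-1-2\alpha)p_n'(x;\alpha)-\big((2\alpha+1)x-\alpha^2\big)p_n(x;\alpha)$, where primes denote derivatives in $x$; (ii) $(2\alpha+1)\,x\,p_n(x;\alpha+1)=-p_{n+1}(x;\alpha)+\alpha^2 p_n(x;\alpha)$; (iii) $p_n(0;\alpha)=\alpha^{2n}$; (iv) $p_n(x;\alpha)=(-2)^n(\alpha+1/2)_n\,x^n+a_{n-1}(x)$ for some polynomial $a_{n-1}$ of degree at most $n-1$ (with $a_{-1}=0$).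
   Context: Let $\mathcal{A}$ be the Bessel-type differential operator acting on (analytic) functions of $x>0$ by $\mathcal{A}f(x)=-x^2f''(x)-xf'(x)+x^2f(x)$, and let $\mathcal{A}^n$ denote its $n$-th iterate ($\mathcal{A}^0$ = identity). For $\alpha\in\mathbb{C}$ and $n\in\mathbb{N}_0$ define, for $x>0$, $p_n(x;\alpha)=(-1)^n e^{x}x^{-\alpha}\,\mathcal{A}^n\big(e^{-x}x^{\alpha}\big)$. The Pochhammer symbol is $(y)_0=1$, $(y)_n=\prod_{j=0}^{n-1}(y+j)$ for $n\ge1$. *)

theory Defs
  imports "HOL-Analysis.Analysis" "HOL-Computational_Algebra.Polynomial"
begin

text \<open>Functions of the real variable x (meaningful for x > 0) with complex values.
  The Bessel-type operator A f(x) = -x^2 f''(x) - x f'(x) + x^2 f(x).\<close>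
definition bessel_op :: "(real \<Rightarrow> complex) \<Rightarrow> real \<Rightarrow> complex" where
  "bessel_op f = (\<lambda>x.
     - ((complex_of_real x)^2 * vector_derivative (\<lambda>t. vector_derivative f (at t)) (at x))
     - complex_of_real x * vector_derivative f (at x)
     + (complex_of_real x)^2 * f x)"

definition pfun :: "nat \<Rightarrow> complex \<Rightarrow> real \<Rightarrow> complex" where
  "pfun n \<alpha> x = (-1)^n * exp (complex_of_real x) * (complex_of_real x) powr (-\<alpha>)
     * (bessel_op ^^ n) (\<lambda>t. exp (- complex_of_real t) * (complex_of_real t) powr \<alpha>) x"

end

theory Submission
  imports Defs
begin

(*
  Write w_b(z) = exp(-z) z^b for the weight, so that
  p_n(x;a) = (-1)^n A^n(w_a)(x) / w_a(x).  Conjugating the Bessel-type operator A by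
  the weight turns it into a second-order operator on polynomials:
      A(w_b q) = - w_b T_b(q),
      T_b(q) = x^2 q'' - x (2x - 1 - 2b) q' - ((2b+1) x - b^2) q.
  Hence A^n(w_b Q) = (-1)^n w_b T_b^n(Q), and p_n(x;a) is the polynomial P_n = T_a^n(1).
  Everything else is read off from T_a:
  (i)   is P_(n+1) = T_a(P_n) evaluated pointwise;
  (ii)  follows from w_(a+1) = x w_a, which gives x p_n(x;a+1) = T_a^n(x), together
        with the linearity of T_a and the identity (2a+1) x = a^2 - T_a(1);
  (iii) and (iv) follow because T_a raises the degree by one, multiplying the leading
        coefficient by -(2d + 2a + 1), and multiplies the constant term by a^2;
  the condition Re a > -1/2 makes the leading coefficient (-2)^n (a+1/2)_n nonzero.
*)

section \<open>The conjugated operator on polynomials\<close>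

text \<open>The operator T_b, written with shifts so that its coefficients are easy to compute.\<close>
definition bessel_poly_op :: "complex \<Rightarrow> complex poly \<Rightarrow> complex poly" where
  "bessel_poly_op \<beta> Q = pCons 0 (pCons 0 (pderiv (pderiv Q))) + smult (2*\<beta>+1) (pCons 0 (pderiv Q))
     - smult 2 (pCons 0 (pCons 0 (pderiv Q))) + smult (\<beta>^2) Q - smult (2*\<beta>+1) (pCons 0 Q)"

definition bessel_poly :: "nat \<Rightarrow> complex \<Rightarrow> complex poly" where
  "bessel_poly n \<alpha> = (bessel_poly_op \<alpha> ^^ n) 1"

lemma poly_bessel_poly_op:
  "poly (bessel_poly_op \<beta> Q) z = z^2 * poly (pderiv (pderiv Q)) z
     - z * (2*z - 1 - 2*\<beta>) * poly (pderiv Q) z - ((2*\<beta>+1) * z - \<beta>^2) * poly Q z"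
  by (simp add: bessel_poly_op_def algebra_simps power2_eq_square)

lemma bessel_poly_op_diff: "bessel_poly_op \<beta> (P - Q) = bessel_poly_op \<beta> P - bessel_poly_op \<beta> Q"
  by (rule poly_eqI) (simp add: bessel_poly_op_def coeff_pderiv coeff_pCons algebra_simps split: nat.split)

lemma bessel_poly_op_smult: "bessel_poly_op \<beta> (smult c Q) = smult c (bessel_poly_op \<beta> Q)"
  by (rule poly_eqI) (simp add: bessel_poly_op_def coeff_pderiv coeff_pCons algebra_simps split: nat.split)

lemma bessel_poly_op_pow_diff:
  "(bessel_poly_op \<beta> ^^ n) (P - Q) = (bessel_poly_op \<beta> ^^ n) P - (bessel_poly_op \<beta> ^^ n) Q"
  by (induction n) (simp_all add: bessel_poly_op_diff)

lemma bessel_poly_op_pow_smult: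
  "(bessel_poly_op \<beta> ^^ n) (smult c Q) = smult c ((bessel_poly_op \<beta> ^^ n) Q)"
  by (induction n) (simp_all add: bessel_poly_op_smult)

lemma bessel_poly_op_degree:
  assumes "degree Q \<le> d"
  shows "degree (bessel_poly_op \<beta> Q) \<le> Suc d"
    and "coeff (bessel_poly_op \<beta> Q) (Suc d) = - (2 * of_nat d + 2*\<beta> + 1) * coeff Q d"
proof -
  have vanish: "coeff Q k = 0" if "k > d" for k using assms that by (simp add: coeff_eq_0)
  show "degree (bessel_poly_op \<beta> Q) \<le> Suc d"
  proof (rule degree_le, intro allI impI)
    fix i assume "Suc d < i"
    then obtain m where m: "i = Suc (Suc m)" "d \<le> m" by (cases i; cases "i - 1") auto
    show "coeff (bessel_poly_op \<beta> Q) i = 0"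
      using m vanish[of "Suc m"] vanish[of "Suc (Suc m)"] by (simp add: bessel_poly_op_def coeff_pderiv)
  qed
  show "coeff (bessel_poly_op \<beta> Q) (Suc d) = - (2 * of_nat d + 2*\<beta> + 1) * coeff Q d"
    using vanish[of "Suc d"] vanish[of "Suc (Suc d)"]
    by (cases d) (simp_all add: bessel_poly_op_def coeff_pderiv algebra_simps)
qed

lemma poly_bessel_poly_op_0: "poly (bessel_poly_op \<beta> Q) 0 = \<beta>^2 * poly Q 0"
  by (simp add: bessel_poly_op_def)

lemma bessel_poly_coefficients:
  "degree (bessel_poly n \<alpha>) \<le> n"
  "coeff (bessel_poly n \<alpha>) n = (-2)^n * pochhammer (\<alpha> + 1/2) n"
  "poly (bessel_poly n \<alpha>) 0 = \<alpha> ^ (2*n)"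
proof (induction n)
  case (Suc n)
  note T = bessel_poly_op_degree[OF Suc.IH(1), of \<alpha>]
  have "coeff (bessel_poly (Suc n) \<alpha>) (Suc n) = - (2 * of_nat n + 2*\<alpha> + 1) * ((-2)^n * pochhammer (\<alpha> + 1/2) n)"
    using T(2) Suc.IH(2) by (simp add: bessel_poly_def)
  also have "\<dots> = (-2)^(Suc n) * pochhammer (\<alpha> + 1/2) (Suc n)"
    by (simp add: pochhammer_rec' algebra_simps)
  finally show "coeff (bessel_poly (Suc n) \<alpha>) (Suc n) = (-2)^(Suc n) * pochhammer (\<alpha> + 1/2) (Suc n)" .
  show "degree (bessel_poly (Suc n) \<alpha>) \<le> Suc n"
    using T(1) by (simp add: bessel_poly_def)
  show "poly (bessel_poly (Suc n) \<alpha>) 0 = \<alpha> ^ (2 * Suc n)"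
    using Suc.IH(3) by (simp add: bessel_poly_def poly_bessel_poly_op_0 power_mult power2_eq_square)
qed (simp_all add: bessel_poly_def)

text \<open>For Re a > -1/2 the leading coefficient is nonzero, so P_n has exact degree n.\<close>
lemma degree_bessel_poly:
  assumes "Re \<alpha> > -1/2"
  shows "degree (bessel_poly n \<alpha>) = n"
proof -
  have "pochhammer (\<alpha> + 1/2) n \<noteq> 0"
  proof
    assume "pochhammer (\<alpha> + 1/2) n = 0"
    then obtain k where "\<alpha> + 1/2 = - of_nat k" by (auto simp: pochhammer_eq_0_iff)
    then have "Re (\<alpha> + 1/2) = Re (- of_nat k)" by simp
    then have "Re \<alpha> = -1/2 - real k" by simp
    then show False using assms by simp
  qed
  then have "n \<le> degree (bessel_poly n \<alpha>)"
    by (intro le_degree) (simp add: bessel_poly_coefficients(2))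
  then show ?thesis using bessel_poly_coefficients(1)[of n \<alpha>] by linarith
qed

lemma split_top_monomial:
  fixes P :: "'a::comm_ring_1 poly"
  assumes "degree P \<le> n"
  shows "(if n = 0 then P - monom (coeff P n) n = 0 else degree (P - monom (coeff P n) n) \<le> n - 1)"
proof -
  have vanish: "coeff (P - monom (coeff P n) n) i = 0" if "i \<ge> n" for i
    using that assms by (cases "i = n") (auto simp: coeff_eq_0)
  show ?thesis
  proof (cases "n = 0")
    case True
    have "P - monom (coeff P n) n = 0"
    proof (rule poly_eqI)
      show "coeff (P - monom (coeff P n) n) i = coeff 0 i" for i
        using vanish[of i] True by (simp only: le0 coeff_0)
    qed
    then show ?thesis unfolding if_P[OF True] .
  next
    case False
    have "degree (P - monom (coeff P n) n) \<le> n - 1"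
    proof (rule degree_le, intro allI impI)
      fix i assume "n - 1 < i"
      then show "coeff (P - monom (coeff P n) n) i = 0" using False by (intro vanish) linarith
    qed
    then show ?thesis unfolding if_not_P[OF False] .
  qed
qed

section \<open>Conjugating the Bessel-type operator by the weight\<close>

text \<open>The weight w_b(z) = exp(-z) z^b, using the principal branch of the power.\<close>
definition bessel_weight :: "complex \<Rightarrow> complex \<Rightarrow> complex" where
  "bessel_weight \<beta> z = exp (-z) * z powr \<beta>"

lemma bessel_weight_shift: "bessel_weight (\<beta> + 1) z = bessel_weight \<beta> z * z"
  by (simp add: bessel_weight_def powr_add)

lemma weighted_has_field_derivative:
  assumes "z \<notin> \<real>\<^sub>\<le>\<^sub>0" and "(q has_field_derivative q') (at z)"
  shows "((\<lambda>z. bessel_weight \<beta> z * q z) has_field_derivative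
           bessel_weight \<beta> z * (q' + (\<beta>/z - 1) * q z)) (at z)"
proof -
  have z: "z \<noteq> 0" using assms(1) by auto
  have "((\<lambda>z. exp (-z) * z powr \<beta> * q z) has_field_derivative
         (exp (-z) * (-1) * z powr \<beta> + exp (-z) * (\<beta> * z powr (\<beta> - 1))) * q z
           + exp (-z) * z powr \<beta> * q') (at z)"
    by (intro derivative_eq_intros has_field_derivative_powr assms) (use assms in auto)
  moreover have "z powr (\<beta> - 1) = z powr \<beta> / z" using z by (simp add: powr_diff)
  ultimately show ?thesis unfolding bessel_weight_def
    by (simp add: field_simps z)
qed

lemma weighted_poly_derivatives:
  assumes "z \<notin> \<real>\<^sub>\<le>\<^sub>0"
  shows "((\<lambda>z. bessel_weight \<beta> z * poly Q z) has_field_derivative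
           bessel_weight \<beta> z * (poly (pderiv Q) z + (\<beta>/z - 1) * poly Q z)) (at z)"
    and "((\<lambda>z. bessel_weight \<beta> z * (poly (pderiv Q) z + (\<beta>/z - 1) * poly Q z)) has_field_derivative
           bessel_weight \<beta> z * (poly (pderiv (pderiv Q)) z + (\<beta>/z - 1) * poly (pderiv Q) z
             - \<beta>/z^2 * poly Q z + (\<beta>/z - 1) * (poly (pderiv Q) z + (\<beta>/z - 1) * poly Q z))) (at z)"
proof -
  have z: "z \<noteq> 0" using assms by auto
  show "((\<lambda>z. bessel_weight \<beta> z * poly Q z) has_field_derivative
           bessel_weight \<beta> z * (poly (pderiv Q) z + (\<beta>/z - 1) * poly Q z)) (at z)"
    by (rule weighted_has_field_derivative[OF assms poly_DERIV])
  have "((\<lambda>z. poly (pderiv Q) z + (\<beta>/z - 1) * poly Q z) has_field_derivative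
      poly (pderiv (pderiv Q)) z + (- (\<beta> / z^2) * poly Q z + (\<beta>/z - 1) * poly (pderiv Q) z)) (at z)"
    by (intro derivative_eq_intros poly_DERIV DERIV_mult) (use z in \<open>auto simp: divide_inverse power2_eq_square\<close>)
  then have "((\<lambda>z. poly (pderiv Q) z + (\<beta>/z - 1) * poly Q z) has_field_derivative
      poly (pderiv (pderiv Q)) z + (\<beta>/z - 1) * poly (pderiv Q) z - \<beta>/z^2 * poly Q z) (at z)"
    by (simp add: algebra_simps)
  then show "((\<lambda>z. bessel_weight \<beta> z * (poly (pderiv Q) z + (\<beta>/z - 1) * poly Q z)) has_field_derivative
           bessel_weight \<beta> z * (poly (pderiv (pderiv Q)) z + (\<beta>/z - 1) * poly (pderiv Q) z
             - \<beta>/z^2 * poly Q z + (\<beta>/z - 1) * (poly (pderiv Q) z + (\<beta>/z - 1) * poly Q z))) (at z)"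
    by (rule weighted_has_field_derivative[OF assms])
qed

lemma vector_derivative_local:
  fixes f g :: "real \<Rightarrow> 'a::real_normed_vector"
  assumes "open S" "x \<in> S" "\<And>t. t \<in> S \<Longrightarrow> f t = g t"
  shows "vector_derivative f (at x) = vector_derivative g (at x)"
  using assms by (intro vector_derivative_cong_eq) (auto intro: eventually_mono[OF eventually_nhds_in_open])

text \<open>Hence A f at a point x > 0 only depends on f on the half-line, so A can be iterated on
  functions that agree there.\<close>
lemma bessel_op_local:
  assumes "\<And>t. t > 0 \<Longrightarrow> f t = g t" "(x::real) > 0"
  shows "bessel_op f x = bessel_op g x"
proof -
  have first: "vector_derivative f (at t) = vector_derivative g (at t)" if "t > 0" for t
    using assms(1) that by (intro vector_derivative_local[of "{0<..}"]) auto
  have "vector_derivative (\<lambda>t. vector_derivative f (at t)) (at x)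
      = vector_derivative (\<lambda>t. vector_derivative g (at t)) (at x)"
    by (rule vector_derivative_local[of "{0<..}"]) (use first assms(2) in auto)
  then show ?thesis
    unfolding bessel_op_def by (simp only: first[OF assms(2)] assms(1)[OF assms(2)])
qed

lemma bessel_op_of_field_derivatives:
  fixes F DF :: "complex \<Rightarrow> complex"
  assumes F: "\<And>t. t > 0 \<Longrightarrow> (F has_field_derivative DF (complex_of_real t)) (at (complex_of_real t))"
    and DF: "(DF has_field_derivative DDF) (at (complex_of_real x))" and x: "x > 0"
  shows "bessel_op (\<lambda>t. F (complex_of_real t)) x =
           - ((complex_of_real x)^2 * DDF) - complex_of_real x * DF (complex_of_real x) + (complex_of_real x)^2 * F (complex_of_real x)"
proof -
  have first: "vector_derivative (\<lambda>t. F (complex_of_real t)) (at t) = DF (complex_of_real t)" if "t > 0" for t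
    using F[OF that] by (intro vector_derivative_at has_vector_derivative_real_field)
  have "vector_derivative (\<lambda>t. vector_derivative (\<lambda>t. F (complex_of_real t)) (at t)) (at x)
      = vector_derivative (\<lambda>t. DF (complex_of_real t)) (at x)"
    using first x by (intro vector_derivative_local[of "{0<..}"]) auto
  also have "\<dots> = DDF"
    using DF by (intro vector_derivative_at has_vector_derivative_real_field)
  finally show ?thesis using first x by (simp add: bessel_op_def)
qed

lemma bessel_op_weighted_poly:
  assumes x: "(x::real) > 0"
  shows "bessel_op (\<lambda>t. bessel_weight \<beta> (of_real t) * poly Q (of_real t)) x
     = - (bessel_weight \<beta> (of_real x) * poly (bessel_poly_op \<beta> Q) (of_real x))"
proof -
  have off_cut: "complex_of_real t \<notin> \<real>\<^sub>\<le>\<^sub>0" if "t > 0" for t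
    using that by (simp add: complex_nonpos_Reals_iff)
  have xz: "complex_of_real x \<noteq> 0" using x by simp
  have "bessel_op (\<lambda>t. bessel_weight \<beta> (of_real t) * poly Q (of_real t)) x
     = - ((of_real x)^2 * (bessel_weight \<beta> (of_real x) * (poly (pderiv (pderiv Q)) (of_real x)
          + (\<beta>/of_real x - 1) * poly (pderiv Q) (of_real x) - \<beta>/(of_real x)^2 * poly Q (of_real x)
          + (\<beta>/of_real x - 1) * (poly (pderiv Q) (of_real x) + (\<beta>/of_real x - 1) * poly Q (of_real x)))))
       - of_real x * (bessel_weight \<beta> (of_real x) * (poly (pderiv Q) (of_real x)
          + (\<beta>/of_real x - 1) * poly Q (of_real x)))
       + (of_real x)^2 * (bessel_weight \<beta> (of_real x) * poly Q (of_real x))"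
    by (rule bessel_op_of_field_derivatives[OF weighted_poly_derivatives(1)[OF off_cut]
        weighted_poly_derivatives(2)[OF off_cut[OF x]] x])
  also have "\<dots> = - (bessel_weight \<beta> (of_real x) * poly (bessel_poly_op \<beta> Q) (of_real x))"
    using xz by (simp add: poly_bessel_poly_op field_simps power2_eq_square)
  finally show ?thesis .
qed

lemma bessel_op_iterate_weighted_poly:
  assumes "(x::real) > 0"
  shows "(bessel_op ^^ n) (\<lambda>t. bessel_weight \<beta> (of_real t) * poly Q (of_real t)) x
     = bessel_weight \<beta> (of_real x) * poly (smult ((-1)^n) ((bessel_poly_op \<beta> ^^ n) Q)) (of_real x)"
  using assms
proof (induction n arbitrary: x)
  case (Suc n)
  have "(bessel_op ^^ Suc n) (\<lambda>t. bessel_weight \<beta> (of_real t) * poly Q (of_real t)) x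
    = bessel_op (\<lambda>t. bessel_weight \<beta> (of_real t)
        * poly (smult ((-1)^n) ((bessel_poly_op \<beta> ^^ n) Q)) (of_real t)) x"
    using Suc by (simp only: funpow.simps comp_def) (rule bessel_op_local)
  also have "\<dots> = bessel_weight \<beta> (of_real x)
        * poly (smult ((-1)^Suc n) ((bessel_poly_op \<beta> ^^ Suc n) Q)) (of_real x)"
    using Suc.prems by (subst bessel_op_weighted_poly) (simp_all add: bessel_poly_op_smult)
  finally show ?case .
qed simp

section \<open>The functions p_n as polynomials\<close>

lemma normalized_iterate_weighted_poly:
  assumes x: "(x::real) > 0"
  shows "(-1)^n * exp (of_real x) * (of_real x) powr (-\<beta>)
           * (bessel_op ^^ n) (\<lambda>t. bessel_weight \<beta> (of_real t) * poly Q (of_real t)) x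
         = poly ((bessel_poly_op \<beta> ^^ n) Q) (of_real x)"
proof -
  have weight: "exp (complex_of_real x) * complex_of_real x powr (-\<beta>) * bessel_weight \<beta> (complex_of_real x) = 1"
    using x by (simp add: bessel_weight_def powr_minus exp_minus field_simps powr_def)
  have sign: "(-1::complex)^n * (-1)^n = 1" by (simp add: power_mult_distrib[symmetric])
  have "(-1)^n * exp (of_real x) * (of_real x) powr (-\<beta>)
           * (bessel_op ^^ n) (\<lambda>t. bessel_weight \<beta> (of_real t) * poly Q (of_real t)) x
      = ((-1)^n * (-1)^n) * (exp (complex_of_real x) * complex_of_real x powr (-\<beta>)
           * bessel_weight \<beta> (complex_of_real x)) * poly ((bessel_poly_op \<beta> ^^ n) Q) (of_real x)"
    unfolding bessel_op_iterate_weighted_poly[OF x] poly_smult by (simp only: ac_simps)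
  then show ?thesis unfolding weight sign by simp
qed

lemma pfun_eq_bessel_poly:
  "(x::real) > 0 \<Longrightarrow> pfun n \<alpha> x = poly (bessel_poly n \<alpha>) (of_real x)"
  using normalized_iterate_weighted_poly[of x n \<alpha> 1]
  by (simp add: pfun_def bessel_poly_def bessel_weight_def)

text \<open>Since w_(a+1) = x w_a, the function x p_n(x;a+1) is T_a^n(x).\<close>
lemma pfun_shift_eq:
  assumes x: "(x::real) > 0"
  shows "of_real x * pfun n (\<alpha> + 1) x = poly ((bessel_poly_op \<alpha> ^^ n) [:0, 1:]) (of_real x)"
proof -
  have xz: "complex_of_real x \<noteq> 0" using x by simp
  have weight: "(\<lambda>t. exp (- complex_of_real t) * complex_of_real t powr (\<alpha> + 1))
      = (\<lambda>t. bessel_weight \<alpha> (of_real t) * poly [:0, 1:] (of_real t))"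
    using bessel_weight_shift by (simp add: bessel_weight_def[symmetric])
  have power: "complex_of_real x * complex_of_real x powr (-(\<alpha> + 1)) = complex_of_real x powr (-\<alpha>)"
    using xz by (simp add: powr_diff)
  have "of_real x * pfun n (\<alpha> + 1) x
      = (-1)^n * exp (of_real x) * (of_real x * (of_real x) powr (-(\<alpha> + 1)))
          * (bessel_op ^^ n) (\<lambda>t. exp (- complex_of_real t) * complex_of_real t powr (\<alpha> + 1)) x"
    by (simp add: pfun_def ac_simps)
  also have "\<dots> = poly ((bessel_poly_op \<alpha> ^^ n) [:0, 1:]) (of_real x)"
    unfolding weight power by (rule normalized_iterate_weighted_poly[OF x])
  finally show ?thesis .
qed

lemma pfun_derivatives:
  assumes x: "(x::real) > 0"
  shows "vector_derivative (pfun n \<alpha>) (at x) = poly (pderiv (bessel_poly n \<alpha>)) (of_real x)"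
    and "vector_derivative (\<lambda>t. vector_derivative (pfun n \<alpha>) (at t)) (at x)
           = poly (pderiv (pderiv (bessel_poly n \<alpha>))) (of_real x)"
proof -
  have poly_vd: "vector_derivative (\<lambda>t. poly Q (complex_of_real t)) (at t) = poly (pderiv Q) (of_real t)"
    for Q t by (intro vector_derivative_at has_vector_derivative_real_field poly_DERIV)
  have first: "vector_derivative (pfun n \<alpha>) (at t) = poly (pderiv (bessel_poly n \<alpha>)) (of_real t)"
    if "t > 0" for t
  proof -
    have "vector_derivative (pfun n \<alpha>) (at t)
        = vector_derivative (\<lambda>t. poly (bessel_poly n \<alpha>) (complex_of_real t)) (at t)"
      by (rule vector_derivative_local[of "{0<..}"]) (use that pfun_eq_bessel_poly in auto)
    then show ?thesis by (simp only: poly_vd)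
  qed
  then show "vector_derivative (pfun n \<alpha>) (at x) = poly (pderiv (bessel_poly n \<alpha>)) (of_real x)"
    using x .
  have "vector_derivative (\<lambda>t. vector_derivative (pfun n \<alpha>) (at t)) (at x)
      = vector_derivative (\<lambda>t. poly (pderiv (bessel_poly n \<alpha>)) (of_real t)) (at x)"
    using first x by (intro vector_derivative_local[of "{0<..}"]) auto
  then show "vector_derivative (\<lambda>t. vector_derivative (pfun n \<alpha>) (at t)) (at x)
           = poly (pderiv (pderiv (bessel_poly n \<alpha>))) (of_real x)"
    by (simp add: poly_vd)
qed

lemma bessel_poly_shift_relation:
  "smult (2*\<alpha> + 1) ((bessel_poly_op \<alpha> ^^ n) [:0, 1:])
     = smult (\<alpha>^2) (bessel_poly n \<alpha>) - bessel_poly (Suc n) \<alpha>"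
proof -
  have linear_term: "smult (2*\<alpha> + 1) [:0, 1:] = smult (\<alpha>^2) 1 - bessel_poly_op \<alpha> 1"
    by (simp add: bessel_poly_op_def)
  have "smult (2*\<alpha> + 1) ((bessel_poly_op \<alpha> ^^ n) [:0, 1:])
      = (bessel_poly_op \<alpha> ^^ n) (smult (\<alpha>^2) 1 - bessel_poly_op \<alpha> 1)"
    by (simp only: bessel_poly_op_pow_smult[symmetric] linear_term)
  also have "\<dots> = smult (\<alpha>^2) ((bessel_poly_op \<alpha> ^^ n) 1) - (bessel_poly_op \<alpha> ^^ Suc n) 1"
    by (simp only: bessel_poly_op_pow_diff bessel_poly_op_pow_smult funpow_Suc_right comp_def)
  finally show ?thesis by (simp only: bessel_poly_def)
qed

theorem lemma2p1:
  fixes \<alpha> :: complex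
  assumes "Re \<alpha> > -1/2"
  shows "\<forall>n::nat.
     (\<exists>P :: complex poly.
        degree P = n
      \<and> (\<forall>x::real. x > 0 \<longrightarrow> pfun n \<alpha> x = poly P (complex_of_real x))
      \<and> poly P 0 = \<alpha> ^ (2*n)
      \<and> (\<exists>a :: complex poly.
            (if n = 0 then a = 0 else degree a \<le> n - 1)
          \<and> P = monom ((-2)^n * pochhammer (\<alpha> + 1/2) n) n + a))
   \<and> (\<forall>x::real. x > 0 \<longrightarrow>
        pfun (Suc n) \<alpha> x =
          (complex_of_real x)^2 * vector_derivative (\<lambda>t. vector_derivative (pfun n \<alpha>) (at t)) (at x)
          - complex_of_real x * (2 * complex_of_real x - 1 - 2*\<alpha>) * vector_derivative (pfun n \<alpha>) (at x)
          - ((2*\<alpha> + 1) * complex_of_real x - \<alpha>^2) * pfun n \<alpha> x)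
   \<and> (\<forall>x::real. x > 0 \<longrightarrow>
        (2*\<alpha> + 1) * complex_of_real x * pfun n (\<alpha> + 1) x = - pfun (Suc n) \<alpha> x + \<alpha>^2 * pfun n \<alpha> x)"
proof (intro allI conjI impI)
  fix n :: nat
  let ?P = "bessel_poly n \<alpha>" and ?c = "(-2)^n * pochhammer (\<alpha> + 1/2) n"
  show "\<exists>P :: complex poly. degree P = n
      \<and> (\<forall>x::real. x > 0 \<longrightarrow> pfun n \<alpha> x = poly P (complex_of_real x))
      \<and> poly P 0 = \<alpha> ^ (2*n)
      \<and> (\<exists>a. (if n = 0 then a = 0 else degree a \<le> n - 1) \<and> P = monom ?c n + a)"
    using degree_bessel_poly[OF assms] pfun_eq_bessel_poly bessel_poly_coefficients[of n \<alpha>]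
      split_top_monomial[of ?P n]
    by (intro exI[of _ ?P] conjI exI[of _ "?P - monom ?c n"]) auto
  fix x :: real assume x: "x > 0"
  show "pfun (Suc n) \<alpha> x =
          (complex_of_real x)^2 * vector_derivative (\<lambda>t. vector_derivative (pfun n \<alpha>) (at t)) (at x)
          - complex_of_real x * (2 * complex_of_real x - 1 - 2*\<alpha>) * vector_derivative (pfun n \<alpha>) (at x)
          - ((2*\<alpha> + 1) * complex_of_real x - \<alpha>^2) * pfun n \<alpha> x"
    using x by (simp add: pfun_eq_bessel_poly pfun_derivatives bessel_poly_def poly_bessel_poly_op)
  have "(2*\<alpha> + 1) * complex_of_real x * pfun n (\<alpha> + 1) x
      = poly (smult (2*\<alpha> + 1) ((bessel_poly_op \<alpha> ^^ n) [:0, 1:])) (of_real x)"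
    using pfun_shift_eq[OF x, of n \<alpha>] by (simp add: mult.assoc)
  then show "(2*\<alpha> + 1) * complex_of_real x * pfun n (\<alpha> + 1) x = - pfun (Suc n) \<alpha> x + \<alpha>^2 * pfun n \<alpha> x"
    using x by (simp add: bessel_poly_shift_relation pfun_eq_bessel_poly)
qed

end
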